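(* Let $X$ be a set, $B=(B,+,0)$ a unitary magma, and let $(A,k,q,s,p)$ and $(A',k',q',s',p')$ be two retraction points from $X$ to $B$. If there exists a morphism of unitary magmas $\alpha\colon A\to A'$ such that $\alpha k=k'$, $\alpha s=s'$ and $q'\alpha=q$, then $\alpha$ is an isomorphism.
   Context: A unitary magma is a set with a binary operation $+$ and an element $0$ with $b+0=b=0+b$ for all $b$; morphisms preserve $+$ and $0$. Given a set $X$ and a unitary magma $B$, a retraction point from $X$ to $B$ is a tuple $(A,k,q,s,p)$ where $A=(A,+,0)$ is a unitary magma, $k\colon X\to A$ and $q\colon A\to X$ are maps, $s\colon B\to A$ and $p\colon A\to B$ are morphisms of unitary magmas, and $p(s(b))=b$, $q(k(x))=x$, $p(k(x))=0$, $q(s(b))=q(0)$, and $k(q(a))+s(p(a))=a$ for all $x\in X$, $b\in B$, $a\in A$. *)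

theory Defs
  imports Main
begin

definition unitary_magma :: "'a set \<Rightarrow> ('a \<Rightarrow> 'a \<Rightarrow> 'a) \<Rightarrow> 'a \<Rightarrow> bool" where
  "unitary_magma M add z \<longleftrightarrow>
     z \<in> M \<and> (\<forall>a\<in>M. \<forall>b\<in>M. add a b \<in> M) \<and> (\<forall>b\<in>M. add b z = b \<and> add z b = b)"

definition um_hom :: "'a set \<Rightarrow> ('a \<Rightarrow> 'a \<Rightarrow> 'a) \<Rightarrow> 'a \<Rightarrow> 'b set \<Rightarrow> ('b \<Rightarrow> 'b \<Rightarrow> 'b) \<Rightarrow> 'b
                       \<Rightarrow> ('a \<Rightarrow> 'b) \<Rightarrow> bool" where
  "um_hom M addM zM N addN zN f \<longleftrightarrow>
     (\<forall>a\<in>M. f a \<in> N) \<and> (\<forall>a\<in>M. \<forall>b\<in>M. f (addM a b) = addN (f a) (f b)) \<and> f zM = zN"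

definition um_iso :: "'a set \<Rightarrow> ('a \<Rightarrow> 'a \<Rightarrow> 'a) \<Rightarrow> 'a \<Rightarrow> 'b set \<Rightarrow> ('b \<Rightarrow> 'b \<Rightarrow> 'b) \<Rightarrow> 'b
                       \<Rightarrow> ('a \<Rightarrow> 'b) \<Rightarrow> bool" where
  "um_iso M addM zM N addN zN f \<longleftrightarrow>
     um_hom M addM zM N addN zN f \<and>
     (\<exists>g. um_hom N addN zN M addM zM g \<and> (\<forall>a\<in>M. g (f a) = a) \<and> (\<forall>b\<in>N. f (g b) = b))"

definition retraction_point ::
  "'x set \<Rightarrow> 'b set \<Rightarrow> ('b \<Rightarrow> 'b \<Rightarrow> 'b) \<Rightarrow> 'b \<Rightarrow>
   'a set \<Rightarrow> ('a \<Rightarrow> 'a \<Rightarrow> 'a) \<Rightarrow> 'a \<Rightarrow>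
   ('x \<Rightarrow> 'a) \<Rightarrow> ('a \<Rightarrow> 'x) \<Rightarrow> ('b \<Rightarrow> 'a) \<Rightarrow> ('a \<Rightarrow> 'b) \<Rightarrow> bool" where
  "retraction_point X B addB zB A addA zA k q s p \<longleftrightarrow>
     unitary_magma A addA zA \<and>
     (\<forall>x\<in>X. k x \<in> A) \<and> (\<forall>a\<in>A. q a \<in> X) \<and>
     um_hom B addB zB A addA zA s \<and> um_hom A addA zA B addB zB p \<and>
     (\<forall>b\<in>B. p (s b) = b) \<and> (\<forall>x\<in>X. q (k x) = x) \<and> (\<forall>x\<in>X. p (k x) = zB) \<and>
     (\<forall>b\<in>B. q (s b) = q zA) \<and> (\<forall>a\<in>A. addA (k (q a)) (s (p a)) = a)"

end

theory Submission
  imports Defs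
begin

text \<open>Every element of a retraction point splits as \<open>a = k (q a) + s (p a)\<close>. A morphism \<open>\<alpha>\<close>
  compatible with \<open>k\<close> and \<open>s\<close> also satisfies \<open>p' \<alpha> = p\<close>, and if it is compatible with \<open>q\<close> as
  well, then \<open>c \<mapsto> k (q' c) + s (p' c)\<close> is a two-sided inverse of \<open>\<alpha>\<close>.\<close>

lemma um_iso_if_inverse:
  assumes M: "unitary_magma M addM zM"
    and f: "um_hom M addM zM N addN zN f"
    and g_into: "\<forall>b\<in>N. g b \<in> M"
    and gf: "\<forall>a\<in>M. g (f a) = a"
    and fg: "\<forall>b\<in>N. f (g b) = b"
  shows "um_iso M addM zM N addN zN f"
proof -
  have "g (addN b c) = addM (g b) (g c)" if "b \<in> N" "c \<in> N" for b c
  proof -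
    have "addN b c = f (addM (g b) (g c))"
      using f g_into fg that unfolding um_hom_def by auto
    then show ?thesis
      using M g_into gf that unfolding unitary_magma_def by auto
  qed
  moreover have "g zN = zM"
    using M f gf unfolding um_hom_def unitary_magma_def by metis
  ultimately have "um_hom N addN zN M addM zM g"
    using g_into unfolding um_hom_def by blast
  then show ?thesis
    using f gf fg unfolding um_iso_def by blast
qed

lemma retraction_point_hom_proj:
  assumes B: "unitary_magma B addB zB"
    and R: "retraction_point X B addB zB A addA zA k q s p"
    and R': "retraction_point X B addB zB A' addA' zA' k' q' s' p'"
    and \<alpha>: "um_hom A addA zA A' addA' zA' \<alpha>"
    and \<alpha>k: "\<forall>x\<in>X. \<alpha> (k x) = k' x"
    and \<alpha>s: "\<forall>b\<in>B. \<alpha> (s b) = s' b"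
    and a: "a \<in> A"
  shows "p' (\<alpha> a) = p a"
proof -
  have qa: "q a \<in> X" and pa: "p a \<in> B"
    using R a unfolding retraction_point_def um_hom_def by auto
  have "\<alpha> a = \<alpha> (addA (k (q a)) (s (p a)))"
    using R a unfolding retraction_point_def by auto
  also have "\<dots> = addA' (k' (q a)) (s' (p a))"
    using R \<alpha> \<alpha>k \<alpha>s qa pa unfolding retraction_point_def um_hom_def by auto
  finally have "p' (\<alpha> a) = addB (p' (k' (q a))) (p' (s' (p a)))"
    using R' qa pa unfolding retraction_point_def um_hom_def by auto
  also have "\<dots> = addB zB (p a)"
    using R' qa pa unfolding retraction_point_def by auto
  also have "\<dots> = p a"
    using B pa unfolding unitary_magma_def by auto
  finally show ?thesis .
qed

lemma retraction_point_hom_surj: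
  assumes R: "retraction_point X B addB zB A addA zA k q s p"
    and R': "retraction_point X B addB zB A' addA' zA' k' q' s' p'"
    and \<alpha>: "um_hom A addA zA A' addA' zA' \<alpha>"
    and \<alpha>k: "\<forall>x\<in>X. \<alpha> (k x) = k' x"
    and \<alpha>s: "\<forall>b\<in>B. \<alpha> (s b) = s' b"
    and c: "c \<in> A'"
  shows "\<alpha> (addA (k (q' c)) (s (p' c))) = c"
proof -
  have "q' c \<in> X" "p' c \<in> B"
    using R' c unfolding retraction_point_def um_hom_def by auto
  then have "\<alpha> (addA (k (q' c)) (s (p' c))) = addA' (k' (q' c)) (s' (p' c))"
    using R \<alpha> \<alpha>k \<alpha>s unfolding retraction_point_def um_hom_def by auto
  then show ?thesis
    using R' c unfolding retraction_point_def by auto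
qed

theorem proposition2p3:
  fixes X :: "'x set" and B :: "'b set" and addB :: "'b \<Rightarrow> 'b \<Rightarrow> 'b" and zB :: 'b
    and A :: "'a set" and addA :: "'a \<Rightarrow> 'a \<Rightarrow> 'a" and zA :: 'a
    and k :: "'x \<Rightarrow> 'a" and q :: "'a \<Rightarrow> 'x" and s :: "'b \<Rightarrow> 'a" and p :: "'a \<Rightarrow> 'b"
    and A' :: "'c set" and addA' :: "'c \<Rightarrow> 'c \<Rightarrow> 'c" and zA' :: 'c
    and k' :: "'x \<Rightarrow> 'c" and q' :: "'c \<Rightarrow> 'x" and s' :: "'b \<Rightarrow> 'c" and p' :: "'c \<Rightarrow> 'b"
    and \<alpha> :: "'a \<Rightarrow> 'c"
  assumes "unitary_magma B addB zB"
    and "retraction_point X B addB zB A addA zA k q s p"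
    and "retraction_point X B addB zB A' addA' zA' k' q' s' p'"
    and "um_hom A addA zA A' addA' zA' \<alpha>"
    and "\<forall>x\<in>X. \<alpha> (k x) = k' x"
    and "\<forall>b\<in>B. \<alpha> (s b) = s' b"
    and "\<forall>a\<in>A. q' (\<alpha> a) = q a"
  shows "um_iso A addA zA A' addA' zA' \<alpha>"
proof (rule um_iso_if_inverse)
  define g where "g c = addA (k (q' c)) (s (p' c))" for c
  note R = assms(2)[unfolded retraction_point_def um_hom_def unitary_magma_def]
  note R' = assms(3)[unfolded retraction_point_def um_hom_def]
  show "unitary_magma A addA zA"
    using assms(2) unfolding retraction_point_def by blast
  show "um_hom A addA zA A' addA' zA' \<alpha>" by fact
  show "\<forall>c\<in>A'. g c \<in> A"
    using R R' unfolding g_def by auto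
  show "\<forall>a\<in>A. g (\<alpha> a) = a"
    using R assms(7) retraction_point_hom_proj[OF assms(1-6)] unfolding g_def by auto
  show "\<forall>c\<in>A'. \<alpha> (g c) = c"
    using retraction_point_hom_surj[OF assms(2-6)] unfolding g_def by blast
qed

end
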